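(* Let $F$ be an algebraically closed field, $R$ an $F$-algebra, $\sigma$ an $F$-algebra automorphism of $R$, $\delta$ a $\sigma$-derivation of $R$, and $T=R[x;\sigma,\delta]$. Let $\mathfrak m$ be an ideal of $R$ with $R/\mathfrak m\cong F$, and suppose that $\sigma(\mathfrak m)\neq\mathfrak m$ and $\delta(\mathfrak m\cap\sigma^{-1}(\mathfrak m))\subseteq\mathfrak m$. Then there is a unique ideal $M$ of $T$ such that $M\cap R=\mathfrak m$. Moreover, $T/M\cong F$.
   Context: A $\sigma$-derivation is an $F$-linear map $\delta$ with $\delta(ab)=\delta(a)b+\sigma(a)\delta(b)$; $R[x;\sigma,\delta]$ is the algebra generated by $R$ and $x$ with $xr-\sigma(r)x=\delta(r)$ for $r\in R$. *)

theory Defs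
  imports "HOL-Computational_Algebra.Polynomial"
begin

definition two_sided_ideal :: "'a::ring_1 set \<Rightarrow> bool" where
  "two_sided_ideal I \<longleftrightarrow> 0 \<in> I \<and> (\<forall>a\<in>I. \<forall>b\<in>I. a + b \<in> I) \<and> (\<forall>a\<in>I. - a \<in> I)
     \<and> (\<forall>a\<in>I. \<forall>r. r * a \<in> I \<and> a * r \<in> I)"

definition ring_hom1 :: "('a::ring_1 \<Rightarrow> 'b::ring_1) \<Rightarrow> bool" where
  "ring_hom1 h \<longleftrightarrow> h 1 = 1 \<and> (\<forall>a b. h (a + b) = h a + h b) \<and> (\<forall>a b. h (a * b) = h a * h b)"

definition F_algebra :: "('f::field \<Rightarrow> 'r::ring_1) \<Rightarrow> bool" where
  "F_algebra \<iota> \<longleftrightarrow> ring_hom1 \<iota> \<and> (\<forall>c r. \<iota> c * r = r * \<iota> c)"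

definition F_linear :: "('f::field \<Rightarrow> 'r::ring_1) \<Rightarrow> ('f \<Rightarrow> 's::ring_1) \<Rightarrow> ('r \<Rightarrow> 's) \<Rightarrow> bool" where
  "F_linear \<iota> \<kappa> h \<longleftrightarrow> (\<forall>a b. h (a + b) = h a + h b) \<and> (\<forall>c a. h (\<iota> c * a) = \<kappa> c * h a)"

definition F_alg_automorphism :: "('f::field \<Rightarrow> 'r::ring_1) \<Rightarrow> ('r \<Rightarrow> 'r) \<Rightarrow> bool" where
  "F_alg_automorphism \<iota> \<sigma> \<longleftrightarrow> ring_hom1 \<sigma> \<and> F_linear \<iota> \<iota> \<sigma> \<and> bij \<sigma>"

definition sigma_derivation :: "('f::field \<Rightarrow> 'r::ring_1) \<Rightarrow> ('r \<Rightarrow> 'r) \<Rightarrow> ('r \<Rightarrow> 'r) \<Rightarrow> bool" where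
  "sigma_derivation \<iota> \<sigma> \<delta> \<longleftrightarrow> F_linear \<iota> \<iota> \<delta> \<and> (\<forall>a b. \<delta> (a * b) = \<delta> a * b + \<sigma> a * \<delta> b)"

text \<open>T (with embedding j of R and element x) is the Ore extension R[x;\<sigma>,\<delta>]:
  j is an injective unital ring homomorphism, x r = \<sigma>(r) x + \<delta>(r), and T is a free left
  R-module with basis 1, x, x^2, ....\<close>
definition ore_extension ::
  "('r::ring_1 \<Rightarrow> 'r) \<Rightarrow> ('r \<Rightarrow> 'r) \<Rightarrow> ('r \<Rightarrow> 't::ring_1) \<Rightarrow> 't \<Rightarrow> bool" where
  "ore_extension \<sigma> \<delta> j x \<longleftrightarrow>
     ring_hom1 j \<and> inj j \<and>
     (\<forall>r. x * j r = j (\<sigma> r) * x + j (\<delta> r)) \<and>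
     (\<forall>t. \<exists>n a. t = (\<Sum>i<n. j (a i) * x ^ i)) \<and>
     (\<forall>n a. (\<Sum>i<n. j (a i) * x ^ i) = 0 \<longrightarrow> (\<forall>i<n. a i = 0))"

text \<open>For an F-algebra A (structure map \<iota>) and an ideal I of A, "A/I \<cong> F" as F-algebras,
  expressed via the first isomorphism theorem: there is an F-algebra homomorphism A \<rightarrow> F
  whose kernel is exactly I (such a map is automatically surjective, as it fixes F).\<close>
definition quotient_iso_F :: "('f::field \<Rightarrow> 'a::ring_1) \<Rightarrow> 'a set \<Rightarrow> bool" where
  "quotient_iso_F \<iota> I \<longleftrightarrow> (\<exists>\<phi> :: 'a \<Rightarrow> 'f. ring_hom1 \<phi> \<and> F_linear \<iota> id \<phi> \<and> {a. \<phi> a = 0} = I)"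

end

theory Submission
  imports Defs
begin

text \<open>Let \<phi> : R \<rightarrow> F be the character with kernel \<open>\<frak>m\<close>. Sending x to a scalar \<lambda> extends \<phi>
  to a homomorphism T \<rightarrow> F exactly when \<open>\<phi>(\<delta> r) = \<lambda> (\<phi> r - \<phi>(\<sigma> r))\<close> for all r. Since
  \<open>\<sigma>(\<frak>m) \<noteq> \<frak>m\<close> there is \<open>r\<^sub>0 \<in> \<frak>m\<close> with \<open>\<phi>(\<sigma> r\<^sub>0) = 1\<close>; every r is congruent modulo
  \<open>\<frak>m \<inter> \<sigma>\<^sup>-\<^sup>1(\<frak>m)\<close> to a combination of 1 and \<open>r\<^sub>0\<close>, so the hypothesis on \<delta> gives this identity
  with \<open>\<lambda> = -\<phi>(\<delta> r\<^sub>0)\<close>. The kernel of the extension is the required ideal M, and T/M \<cong> F.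
  Conversely, an ideal M with \<open>M \<inter> R = \<frak>m\<close> contains \<open>x r\<^sub>0\<close> and \<open>(\<sigma> r\<^sub>0 - 1) x\<close>, hence, by the
  commutation rule, \<open>x - \<lambda>\<close>; so every element of T is congruent modulo M to a scalar and M is
  that kernel.\<close>

lemma additive_zero:
  fixes f :: "'a::ab_group_add \<Rightarrow> 'b::ab_group_add"
  assumes "\<And>a b. f (a + b) = f a + f b"
  shows "f 0 = 0"
  using assms[of 0 0] by simp

lemma additive_uminus:
  fixes f :: "'a::ab_group_add \<Rightarrow> 'b::ab_group_add"
  assumes "\<And>a b. f (a + b) = f a + f b"
  shows "f (- a) = - f a"
  using assms[of "- a" a] additive_zero[of f, OF assms] by (simp add: eq_neg_iff_add_eq_0)

lemma additive_diff:
  fixes f :: "'a::ab_group_add \<Rightarrow> 'b::ab_group_add"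
  assumes "\<And>a b. f (a + b) = f a + f b"
  shows "f (a - b) = f a - f b"
  using assms[of a "- b"] additive_uminus[of f, OF assms] by simp

lemma ring_hom1_add: "ring_hom1 h \<Longrightarrow> h (a + b) = h a + h b"
  by (simp add: ring_hom1_def)

lemma ring_hom1_mult: "ring_hom1 h \<Longrightarrow> h (a * b) = h a * h b"
  by (simp add: ring_hom1_def)

lemma ring_hom1_one: "ring_hom1 h \<Longrightarrow> h 1 = 1"
  by (simp add: ring_hom1_def)

lemma ring_hom1_zero: "ring_hom1 h \<Longrightarrow> h 0 = 0"
  by (rule additive_zero) (simp add: ring_hom1_def)

lemma ring_hom1_uminus: "ring_hom1 h \<Longrightarrow> h (- a) = - h a"
  by (rule additive_uminus) (simp add: ring_hom1_def)

lemma ring_hom1_diff: "ring_hom1 h \<Longrightarrow> h (a - b) = h a - h b"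
  by (rule additive_diff) (simp add: ring_hom1_def)

lemma ring_hom1_comp: "ring_hom1 f \<Longrightarrow> ring_hom1 g \<Longrightarrow> ring_hom1 (f \<circ> g)"
  by (simp add: ring_hom1_def)

lemma two_sided_ideal_kernel: "ring_hom1 h \<Longrightarrow> two_sided_ideal {a. h a = 0}"
  by (simp add: two_sided_ideal_def ring_hom1_zero ring_hom1_add ring_hom1_uminus ring_hom1_mult)

lemma two_sided_ideal_add: "two_sided_ideal I \<Longrightarrow> a \<in> I \<Longrightarrow> b \<in> I \<Longrightarrow> a + b \<in> I"
  by (simp add: two_sided_ideal_def)

lemma two_sided_ideal_diff: "two_sided_ideal I \<Longrightarrow> a \<in> I \<Longrightarrow> b \<in> I \<Longrightarrow> a - b \<in> I"
  using two_sided_ideal_add[of I a "- b"] by (simp add: two_sided_ideal_def)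

lemma two_sided_ideal_mult_left: "two_sided_ideal I \<Longrightarrow> a \<in> I \<Longrightarrow> r * a \<in> I"
  by (simp add: two_sided_ideal_def)

lemma two_sided_ideal_mult_right: "two_sided_ideal I \<Longrightarrow> a \<in> I \<Longrightarrow> a * r \<in> I"
  by (simp add: two_sided_ideal_def)

lemma sum_lessThan_pad:
  fixes n N :: nat
  assumes "n \<le> N" and "\<And>i. g i 0 = (0 :: 'b::comm_monoid_add)"
  shows "(\<Sum>i<n. g i (a i)) = (\<Sum>i<N. g i (if i < n then a i else 0))"
proof -
  have "{i \<in> {..<N}. i < n} = {..<n}" using assms(1) by auto
  then have "(\<Sum>i<n. g i (a i)) = (\<Sum>i<N. if i < n then g i (a i) else 0)"
    by (simp add: sum.inter_filter[symmetric])
  also have "\<dots> = (\<Sum>i<N. g i (if i < n then a i else 0))"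
    by (rule sum.cong) (simp_all add: assms(2))
  finally show ?thesis .
qed

lemma congruent_to_scalar_if_generators:
  fixes \<psi> :: "'t::ring_1 \<Rightarrow> 'f::ring_1" and e :: "'f \<Rightarrow> 't"
  assumes M: "two_sided_ideal M" and "ring_hom1 \<psi>" "ring_hom1 e"
    and span: "\<And>t. \<exists>n a. t = (\<Sum>i<n. j (a i) * x ^ i)"
    and j_cong: "\<And>r. j r - e (\<psi> (j r)) \<in> M" and x_cong: "x - e (\<psi> x) \<in> M"
  shows "t - e (\<psi> t) \<in> M"
proof -
  define S where "S = {t. t - e (\<psi> t) \<in> M}"
  have add: "t + s \<in> S" if "t \<in> S" "s \<in> S" for t s
  proof -
    have "t + s - e (\<psi> (t + s)) = (t - e (\<psi> t)) + (s - e (\<psi> s))"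
      using assms(2,3) by (simp add: ring_hom1_add)
    then show ?thesis using that two_sided_ideal_add[OF M] unfolding S_def by (metis mem_Collect_eq)
  qed
  have mult: "t * s \<in> S" if "t \<in> S" "s \<in> S" for t s
  proof -
    have "t * s - e (\<psi> (t * s)) = t * (s - e (\<psi> s)) + (t - e (\<psi> t)) * e (\<psi> s)"
      using assms(2,3) by (simp add: ring_hom1_mult algebra_simps)
    then show ?thesis using that two_sided_ideal_add[OF M] two_sided_ideal_mult_left[OF M]
        two_sided_ideal_mult_right[OF M] unfolding S_def by (metis mem_Collect_eq)
  qed
  have "0 \<in> S"
    using M assms(2,3) by (simp add: S_def two_sided_ideal_def ring_hom1_zero)
  have "x ^ i \<in> S" for i
  proof (induction i)
    case 0
    show ?case using M assms(2,3) by (simp add: S_def two_sided_ideal_def ring_hom1_one)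
  next
    case (Suc i)
    then show ?case unfolding power_Suc2 using mult x_cong by (simp add: S_def)
  qed
  then have "(\<Sum>i<n. j (a i) * x ^ i) \<in> S" for n a
    by (induction n) (use \<open>0 \<in> S\<close> add mult j_cong in \<open>auto simp: S_def\<close>)
  then show ?thesis using span[of t] by (auto simp: S_def)
qed

lemma ideal_eq_kernel_if_generators_congruent:
  fixes \<psi> :: "'t::ring_1 \<Rightarrow> 'f::ring_1" and e :: "'f \<Rightarrow> 't"
  assumes M: "two_sided_ideal M" and "ring_hom1 \<psi>" "ring_hom1 e"
    and "\<And>t. \<exists>n a. t = (\<Sum>i<n. j (a i) * x ^ i)"
    and "\<And>r. j r - e (\<psi> (j r)) \<in> M" and "x - e (\<psi> x) \<in> M"
    and proper: "\<And>c. e c \<in> M \<Longrightarrow> c = 0"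
  shows "M = {t. \<psi> t = 0}"
proof (intro set_eqI iffI)
  fix t
  have cong: "t - e (\<psi> t) \<in> M"
    using congruent_to_scalar_if_generators[OF assms(1-6)] .
  show "t \<in> M" if "t \<in> {t. \<psi> t = 0}"
    using cong that ring_hom1_zero[OF assms(3)] by simp
  show "t \<in> {t. \<psi> t = 0}" if "t \<in> M"
  proof -
    have "t - (t - e (\<psi> t)) \<in> M" using two_sided_ideal_diff[OF M that cong] .
    then show ?thesis using proper by simp
  qed
qed

locale ore_character =
  fixes \<sigma> \<delta> :: "'r::ring_1 \<Rightarrow> 'r" and j :: "'r \<Rightarrow> 't::ring_1" and x :: 't
    and \<phi> :: "'r \<Rightarrow> 'f::comm_ring_1" and lam :: 'f
  assumes ore: "ore_extension \<sigma> \<delta> j x"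
    and \<phi>_hom: "ring_hom1 \<phi>"
    and \<phi>_\<delta>: "\<And>r. \<phi> (\<delta> r) = lam * (\<phi> r - \<phi> (\<sigma> r))"
begin

lemma j_hom: "ring_hom1 j"
  and x_mult_j: "x * j r = j (\<sigma> r) * x + j (\<delta> r)"
  and span: "\<exists>n a. t = (\<Sum>i<n. j (a i) * x ^ i)"
  and coeffs_zero: "(\<Sum>i<n. j (a i) * x ^ i) = 0 \<Longrightarrow> i < n \<Longrightarrow> a i = 0"
  using ore by (auto simp: ore_extension_def)

lemma sum_pad_ore:
  "n \<le> N \<Longrightarrow> (\<Sum>i<n. j (a i) * x ^ i) = (\<Sum>i<N. j (if i < n then a i else 0) * x ^ i)"
  by (rule sum_lessThan_pad) (simp_all add: ring_hom1_zero[OF j_hom])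

lemma sum_pad_char:
  "n \<le> N \<Longrightarrow> (\<Sum>i<n. \<phi> (a i) * lam ^ i) = (\<Sum>i<N. \<phi> (if i < n then a i else 0) * lam ^ i)"
  by (rule sum_lessThan_pad) (simp_all add: ring_hom1_zero[OF \<phi>_hom])

lemma char_sum_eq_if_ore_sum_eq:
  assumes "(\<Sum>i<n. j (a i) * x ^ i) = (\<Sum>i<n'. j (b i) * x ^ i)"
  shows "(\<Sum>i<n. \<phi> (a i) * lam ^ i) = (\<Sum>i<n'. \<phi> (b i) * lam ^ i)"
proof -
  define N where "N = max n n'"
  define a' where "a' i = (if i < n then a i else 0)" for i
  define b' where "b' i = (if i < n' then b i else 0)" for i
  have "(\<Sum>i<N. j (a' i - b' i) * x ^ i) = (\<Sum>i<N. j (a' i) * x ^ i) - (\<Sum>i<N. j (b' i) * x ^ i)"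
    by (simp add: ring_hom1_diff[OF j_hom] left_diff_distrib sum_subtractf)
  also have "\<dots> = 0"
    using assms sum_pad_ore[of n N a] sum_pad_ore[of n' N b] by (simp add: N_def a'_def b'_def)
  finally have "i < N \<Longrightarrow> a' i = b' i" for i by (auto dest: coeffs_zero)
  then show ?thesis
    using sum_pad_char[of n N a] sum_pad_char[of n' N b] by (simp add: N_def a'_def b'_def)
qed

definition eval :: "'t \<Rightarrow> 'f" where
  "eval t = (SOME v. \<exists>n a. t = (\<Sum>i<n. j (a i) * x ^ i) \<and> v = (\<Sum>i<n. \<phi> (a i) * lam ^ i))"

lemma eval_ore_sum: "eval (\<Sum>i<n. j (a i) * x ^ i) = (\<Sum>i<n. \<phi> (a i) * lam ^ i)"
proof -
  let ?t = "\<Sum>i<n. j (a i) * x ^ i"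
  let ?P = "\<lambda>v. \<exists>n a. ?t = (\<Sum>i<n. j (a i) * x ^ i) \<and> v = (\<Sum>i<n. \<phi> (a i) * lam ^ i)"
  have "?P (SOME v. ?P v)"
    by (rule someI[of _ "\<Sum>i<n. \<phi> (a i) * lam ^ i"]) (intro exI[of _ n] exI[of _ a] conjI refl)
  then obtain n' a' where "?t = (\<Sum>i<n'. j (a' i) * x ^ i)"
    and "(SOME v. ?P v) = (\<Sum>i<n'. \<phi> (a' i) * lam ^ i)"
    by blast
  then show ?thesis
    unfolding eval_def using char_sum_eq_if_ore_sum_eq[where n=n and a=a and n'=n' and b=a'] by simp
qed

lemma eval_j: "eval (j r) = \<phi> r"
  using eval_ore_sum[where n=1 and a="\<lambda>_. r"] by simp

lemma eval_one: "eval 1 = 1"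
  using eval_j[of 1] by (simp add: ring_hom1_one[OF j_hom] ring_hom1_one[OF \<phi>_hom])

lemma eval_add: "eval (t + s) = eval t + eval s"
proof -
  obtain n a n' b where t: "t = (\<Sum>i<n. j (a i) * x ^ i)" and s: "s = (\<Sum>i<n'. j (b i) * x ^ i)"
    using span by metis
  define N where "N = max n n'"
  define a' where "a' i = (if i < n then a i else 0)" for i
  define b' where "b' i = (if i < n' then b i else 0)" for i
  have t': "t = (\<Sum>i<N. j (a' i) * x ^ i)" and s': "s = (\<Sum>i<N. j (b' i) * x ^ i)"
    unfolding t s N_def a'_def b'_def by (simp_all add: sum_pad_ore)
  have "eval (t + s) = eval (\<Sum>i<N. j (a' i + b' i) * x ^ i)"
    unfolding t' s' by (simp add: ring_hom1_add[OF j_hom] distrib_right sum.distrib)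
  also have "\<dots> = eval t + eval s"
    unfolding t' s' eval_ore_sum by (simp add: ring_hom1_add[OF \<phi>_hom] distrib_right sum.distrib)
  finally show ?thesis .
qed

lemma eval_zero: "eval 0 = 0"
  using eval_ore_sum[where n=0] by simp

lemma eval_sum: "eval (sum f A) = (\<Sum>i\<in>A. eval (f i))"
  by (induction A rule: infinite_finite_induct) (simp_all add: eval_add eval_zero)

lemma eval_j_mult: "eval (j r * t) = \<phi> r * eval t"
proof -
  obtain n a where t: "t = (\<Sum>i<n. j (a i) * x ^ i)" using span by metis
  have "eval (j r * t) = eval (\<Sum>i<n. j (r * a i) * x ^ i)"
    unfolding t by (simp add: sum_distrib_left ring_hom1_mult[OF j_hom] mult.assoc)
  also have "\<dots> = \<phi> r * eval t"
    unfolding t eval_ore_sum by (simp add: sum_distrib_left ring_hom1_mult[OF \<phi>_hom] mult.assoc)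
  finally show ?thesis .
qed

lemma eval_mult_x: "eval (t * x) = eval t * lam"
proof -
  obtain n a where t: "t = (\<Sum>i<n. j (a i) * x ^ i)" using span by metis
  define b where "b i = (case i of 0 \<Rightarrow> 0 | Suc k \<Rightarrow> a k)" for i
  have "eval (t * x) = eval (\<Sum>i<Suc n. j (b i) * x ^ i)"
    unfolding t sum.lessThan_Suc_shift b_def
    by (simp add: sum_distrib_right ring_hom1_zero[OF j_hom] mult.assoc power_commutes)
  also have "\<dots> = (\<Sum>i<Suc n. \<phi> (b i) * lam ^ i)"
    by (rule eval_ore_sum)
  also have "\<dots> = eval t * lam"
    unfolding t eval_ore_sum sum.lessThan_Suc_shift b_def
    by (simp add: sum_distrib_right sum_distrib_left ring_hom1_zero[OF \<phi>_hom] mult_ac)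
  finally show ?thesis .
qed

lemma eval_mult_x_power: "eval (t * x ^ i) = eval t * lam ^ i"
  by (induction i arbitrary: t) (simp_all add: power_Suc2 eval_mult_x flip: mult.assoc)

lemma eval_x_power_mult_j: "eval (x ^ i * j r) = lam ^ i * \<phi> r"
proof (induction i arbitrary: r)
  case 0
  then show ?case by (simp add: eval_j)
next
  case (Suc i)
  have "x ^ Suc i * j r = (x ^ i * j (\<sigma> r)) * x + x ^ i * j (\<delta> r)"
    by (simp only: power_Suc2 mult.assoc x_mult_j distrib_left)
  then have "eval (x ^ Suc i * j r) = lam ^ i * \<phi> (\<sigma> r) * lam + lam ^ i * \<phi> (\<delta> r)"
    by (simp add: eval_add eval_mult_x Suc)
  also have "\<dots> = lam ^ Suc i * \<phi> r"
    by (simp add: \<phi>_\<delta> algebra_simps)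
  finally show ?case .
qed

lemma eval_mult: "eval (t * s) = eval t * eval s"
proof -
  obtain n a where t: "t = (\<Sum>i<n. j (a i) * x ^ i)" using span by metis
  have eval_mult_j: "eval (t * j r) = eval t * \<phi> r" for r
  proof -
    have "eval (t * j r) = (\<Sum>i<n. eval (j (a i) * (x ^ i * j r)))"
      unfolding t by (simp add: sum_distrib_right mult.assoc eval_sum)
    also have "\<dots> = eval t * \<phi> r"
      unfolding t eval_ore_sum by (simp add: eval_j_mult eval_x_power_mult_j sum_distrib_right mult.assoc)
    finally show ?thesis .
  qed
  obtain n' b where s: "s = (\<Sum>i<n'. j (b i) * x ^ i)" using span by metis
  have "t * s = (\<Sum>i<n'. t * j (b i) * x ^ i)"
    unfolding s by (simp add: sum_distrib_left mult.assoc)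
  then have "eval (t * s) = (\<Sum>i<n'. eval t * \<phi> (b i) * lam ^ i)"
    by (simp only: eval_sum eval_mult_x_power eval_mult_j)
  also have "\<dots> = eval t * eval s"
    unfolding s eval_ore_sum by (simp add: sum_distrib_left mult.assoc)
  finally show ?thesis .
qed

lemma eval_hom: "ring_hom1 eval"
  by (simp add: ring_hom1_def eval_one eval_add eval_mult)

lemma eval_x: "eval x = lam"
  using eval_mult_x[of 1] by (simp add: eval_one)

lemma x_minus_scalar_in_ideal:
  assumes M: "two_sided_ideal M" and M_R: "j -` M = {a. \<phi> a = 0}"
    and "\<phi> r\<^sub>0 = 0" "\<phi> (\<sigma> r\<^sub>0) = 1" and "\<phi> s = lam"
  shows "x - j s \<in> M"
proof -
  have j_M: "j a \<in> M \<longleftrightarrow> \<phi> a = 0" for a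
    using M_R[unfolded set_eq_iff] by simp
  have x_r\<^sub>0: "x * j r\<^sub>0 \<in> M"
    using assms(3) j_M two_sided_ideal_mult_left[OF M] by blast
  have "j (\<sigma> r\<^sub>0 - 1) \<in> M"
    using assms(4) j_M by (simp add: ring_hom1_diff[OF \<phi>_hom] ring_hom1_one[OF \<phi>_hom])
  then have "j (\<sigma> r\<^sub>0 - 1) * x \<in> M"
    by (rule two_sided_ideal_mult_right[OF M])
  moreover have "j (\<delta> r\<^sub>0 + s) \<in> M"
    using assms(3-5) j_M by (simp add: \<phi>_\<delta> ring_hom1_add[OF \<phi>_hom])
  ultimately have "x * j r\<^sub>0 - j (\<sigma> r\<^sub>0 - 1) * x - j (\<delta> r\<^sub>0 + s) \<in> M"
    using x_r\<^sub>0 two_sided_ideal_diff[OF M] by blast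
  also have "x * j r\<^sub>0 - j (\<sigma> r\<^sub>0 - 1) * x - j (\<delta> r\<^sub>0 + s) = x - j s"
    unfolding x_mult_j using j_hom
    by (simp add: ring_hom1_diff ring_hom1_add ring_hom1_one algebra_simps)
  finally show ?thesis .
qed

lemma ideal_eq_kernel_eval:
  assumes M: "two_sided_ideal M" and M_R: "j -` M = {a. \<phi> a = 0}"
    and "\<phi> r\<^sub>0 = 0" "\<phi> (\<sigma> r\<^sub>0) = 1"
    and \<iota>: "ring_hom1 \<iota>" "\<And>c. \<phi> (\<iota> c) = c"
  shows "M = {t. eval t = 0}"
proof (rule ideal_eq_kernel_if_generators_congruent[OF M eval_hom ring_hom1_comp[OF j_hom \<iota>(1)]])
  show "\<exists>n a. t = (\<Sum>i<n. j (a i) * x ^ i)" for t by (rule span)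
  show "j r - (j \<circ> \<iota>) (eval (j r)) \<in> M" for r
  proof -
    have "\<phi> (r - \<iota> (\<phi> r)) = 0"
      using \<iota>(2) by (simp add: ring_hom1_diff[OF \<phi>_hom])
    then show ?thesis
      using M_R by (auto simp: eval_j ring_hom1_diff[OF j_hom, symmetric])
  qed
  show "x - (j \<circ> \<iota>) (eval x) \<in> M"
    using x_minus_scalar_in_ideal[OF M M_R assms(3,4), of "\<iota> lam"] \<iota> by (simp add: eval_x)
  show "c = 0" if "(j \<circ> \<iota>) c \<in> M" for c
  proof -
    have "\<phi> (\<iota> c) = 0" using that M_R by auto
    then show ?thesis using \<iota>(2) by simp
  qed
qed

end

lemma character_ne_character_comp:
  assumes "bij \<sigma>" and "\<sigma> ` {a. \<phi> a = 0} \<noteq> {a. \<phi> a = 0}"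
  shows "\<exists>r. \<phi> (\<sigma> r) \<noteq> \<phi> r"
proof (rule ccontr)
  assume "\<not> ?thesis"
  then have "\<sigma> ` {a. \<phi> a = 0} = {a. \<phi> a = 0}"
    using bij_is_surj[OF assms(1)] by (auto simp: image_iff) (metis surjD)
  then show False using assms(2) by simp
qed

lemma exists_character_zero_sigma_one:
  fixes \<iota> :: "'f::field \<Rightarrow> 'r::ring_1"
  assumes \<sigma>: "F_alg_automorphism \<iota> \<sigma>"
    and \<phi>: "ring_hom1 \<phi>" "\<And>c a. \<phi> (\<iota> c * a) = c * \<phi> a"
    and "\<sigma> ` {a. \<phi> a = 0} \<noteq> {a. \<phi> a = 0}"
  shows "\<exists>r\<^sub>0. \<phi> r\<^sub>0 = 0 \<and> \<phi> (\<sigma> r\<^sub>0) = 1"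
proof -
  have \<sigma>_hom: "ring_hom1 \<sigma>" and \<sigma>_lin: "\<And>c a. \<sigma> (\<iota> c * a) = \<iota> c * \<sigma> a" and "bij \<sigma>"
    using \<sigma> by (auto simp: F_alg_automorphism_def F_linear_def)
  have \<phi>_\<iota>: "\<phi> (\<iota> c) = c" and \<sigma>_\<iota>: "\<sigma> (\<iota> c) = \<iota> c" for c
    using \<phi>(2)[of c 1] \<sigma>_lin[of c 1] by (simp_all add: ring_hom1_one \<phi>(1) \<sigma>_hom)
  obtain r where r: "\<phi> (\<sigma> r) \<noteq> \<phi> r"
    using character_ne_character_comp[OF \<open>bij \<sigma>\<close> assms(4)] by blast
  define r\<^sub>0 where "r\<^sub>0 = \<iota> (1 / (\<phi> (\<sigma> r) - \<phi> r)) * (r - \<iota> (\<phi> r))"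
  have "\<phi> r\<^sub>0 = 0" "\<phi> (\<sigma> r\<^sub>0) = 1"
    using r \<phi>(1) \<sigma>_hom unfolding r\<^sub>0_def
    by (simp_all add: \<phi>(2) \<sigma>_lin ring_hom1_diff \<phi>_\<iota> \<sigma>_\<iota>)
  then show ?thesis by blast
qed

lemma character_sigma_derivation_eq:
  assumes \<sigma>: "F_alg_automorphism \<iota> \<sigma>" and \<delta>: "sigma_derivation \<iota> \<sigma> \<delta>"
    and \<phi>: "ring_hom1 \<phi>" "\<And>c a. \<phi> (\<iota> c * a) = c * \<phi> a"
    and \<delta>_m: "\<delta> ` ({a. \<phi> a = 0} \<inter> \<sigma> -` {a. \<phi> a = 0}) \<subseteq> {a. \<phi> a = 0}"
    and r\<^sub>0: "\<phi> r\<^sub>0 = 0" "\<phi> (\<sigma> r\<^sub>0) = 1"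
  shows "\<phi> (\<delta> r) = - \<phi> (\<delta> r\<^sub>0) * (\<phi> r - \<phi> (\<sigma> r))"
proof -
  have \<sigma>_hom: "ring_hom1 \<sigma>" and \<sigma>_lin: "\<And>c a. \<sigma> (\<iota> c * a) = \<iota> c * \<sigma> a"
    using \<sigma> by (auto simp: F_alg_automorphism_def F_linear_def)
  have \<delta>_add: "\<And>a b. \<delta> (a + b) = \<delta> a + \<delta> b" and \<delta>_lin: "\<And>c a. \<delta> (\<iota> c * a) = \<iota> c * \<delta> a"
    and \<delta>_mult: "\<And>a b. \<delta> (a * b) = \<delta> a * b + \<sigma> a * \<delta> b"
    using \<delta> by (auto simp: sigma_derivation_def F_linear_def)
  have \<phi>_\<iota>: "\<phi> (\<iota> c) = c" and \<sigma>_\<iota>: "\<sigma> (\<iota> c) = \<iota> c" for c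
    using \<phi>(2)[of c 1] \<sigma>_lin[of c 1] by (simp_all add: ring_hom1_one \<phi>(1) \<sigma>_hom)
  have \<delta>_\<iota>: "\<delta> (\<iota> c) = 0" for c
    using \<delta>_mult[of 1 1] \<delta>_lin[of c 1] by (simp add: ring_hom1_one[OF \<sigma>_hom])
  define c where "c = \<phi> (\<sigma> r) - \<phi> r"
  define s where "s = r - \<iota> (\<phi> r) - \<iota> c * r\<^sub>0"
  have "\<phi> s = 0" and "\<phi> (\<sigma> s) = 0"
    unfolding s_def c_def using r\<^sub>0 \<phi>(1) \<sigma>_hom
    by (simp_all add: ring_hom1_diff \<phi>(2) \<sigma>_lin \<sigma>_\<iota> \<phi>_\<iota>)
  then have "\<phi> (\<delta> s) = 0" using \<delta>_m by auto
  moreover have "\<phi> (\<delta> s) = \<phi> (\<delta> r) - c * \<phi> (\<delta> r\<^sub>0)"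
    unfolding s_def
    by (simp add: additive_diff[OF \<delta>_add] \<delta>_\<iota> \<delta>_lin ring_hom1_diff[OF \<phi>(1)] \<phi>(2))
  ultimately show ?thesis by (simp add: c_def algebra_simps)
qed

theorem proposition4p3:
  fixes \<iota> :: "'f::alg_closed_field \<Rightarrow> 'r::ring_1"
    and \<sigma> \<delta> :: "'r \<Rightarrow> 'r"
    and j :: "'r \<Rightarrow> 't::ring_1" and x :: 't
    and m :: "'r set"
  assumes "F_algebra \<iota>"
    and "F_alg_automorphism \<iota> \<sigma>"
    and "sigma_derivation \<iota> \<sigma> \<delta>"
    and "ore_extension \<sigma> \<delta> j x"
    and "two_sided_ideal m"
    and "quotient_iso_F \<iota> m"
    and "\<sigma> ` m \<noteq> m"
    and "\<delta> ` (m \<inter> \<sigma> -` m) \<subseteq> m"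
  shows "(\<exists>!M. two_sided_ideal M \<and> j -` M = m)
       \<and> (\<forall>M. two_sided_ideal M \<and> j -` M = m \<longrightarrow> quotient_iso_F (j \<circ> \<iota>) M)"
proof -
  have \<iota>: "ring_hom1 \<iota>" using assms(1) by (simp add: F_algebra_def)
  obtain \<phi> :: "'r \<Rightarrow> 'f" where \<phi>: "ring_hom1 \<phi>" "\<And>c a. \<phi> (\<iota> c * a) = c * \<phi> a"
    and m: "m = {a. \<phi> a = 0}"
    using assms(6) by (auto simp: quotient_iso_F_def F_linear_def)
  have \<phi>_\<iota>: "\<phi> (\<iota> c) = c" for c using \<phi>(2)[of c 1] by (simp add: ring_hom1_one \<phi>(1))
  obtain r\<^sub>0 where r\<^sub>0: "\<phi> r\<^sub>0 = 0" "\<phi> (\<sigma> r\<^sub>0) = 1"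
    using exists_character_zero_sigma_one[OF assms(2) \<phi>] assms(7) m by blast
  have "\<phi> (\<delta> r) = - \<phi> (\<delta> r\<^sub>0) * (\<phi> r - \<phi> (\<sigma> r))" for r
    using character_sigma_derivation_eq[OF assms(2,3) \<phi> _ r\<^sub>0] assms(8) m by blast
  then interpret ore_character \<sigma> \<delta> j x \<phi> "- \<phi> (\<delta> r\<^sub>0)"
    using assms(4) \<phi>(1) by unfold_locales
  let ?K = "{t. eval t = 0}"
  have unique: "M = ?K" if "two_sided_ideal M" "j -` M = m" for M
    using ideal_eq_kernel_eval[OF that[unfolded m] r\<^sub>0 \<iota> \<phi>_\<iota>] .
  have "two_sided_ideal ?K" "j -` ?K = m"
    by (auto simp: two_sided_ideal_kernel eval_hom eval_j m)
  moreover have "quotient_iso_F (j \<circ> \<iota>) ?K"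
    unfolding quotient_iso_F_def F_linear_def
    by (intro exI[of _ eval]) (simp add: eval_hom eval_add eval_j_mult \<phi>_\<iota>)
  ultimately show ?thesis
    using unique by (metis (no_types, lifting))
qed

end
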